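(* Let $\mathbb C_4$ be the complex Clifford algebra generated by $e_1,\dots,e_4$ with $e_je_l+e_le_j=-2\delta_{jl}$, $e_{ij}=e_ie_j$. Let $S^+_4$ be the span of $v^+=\frac14(1-ie_{12})(1-ie_{34})$ and $v^-=\frac14(e_1+ie_2)(e_3+ie_4)$, and let $S^-_4$ be the span of $v^+=\frac14(1-ie_{12})(e_3+ie_4)$ and $v^-=\frac14(e_1+ie_2)(1-ie_{34})$; each is a realization of the basic spinor representation $S$ of $Spin(3)$ under left Clifford multiplication by $e_1,e_2,e_3$. Write $(a,b)$ for $a v^++b v^-$. For $k\in\mathbb N_0$ let $\mathcal M_k(\mathbb R^3,S^\pm_4)$ be the space of $S^\pm_4$-valued $k$-homogeneous polynomials $P$ on $\mathbb R^3$ with $(e_1\partial_{x_1}+e_2\partial_{x_2}+e_3\partial_{x_3})P=0$, and define its basis $F^{k,\pm}_0=\frac{1}{k!2^k}\overline z^k v^+$, $F^{k,\pm}_j=(\tilde X^-)^jF^{k,\pm}_0$ ($0<j\le 2k+1$), where $z=x_1+ix_2$, $\overline z=x_1-ix_2$, $\tilde X^-=2x_3\frac{\partial}{\partial\overline z}-z\frac{\partial}{\partial x_3}+\frac12(-e_{31}+ie_{23})$ with $\frac{\partial}{\partial \overline z}=\frac12(\partial_{x_1}+i\partial_{x_2})$ and the Clifford element acting by left multiplication. Using spherical coordinates $x_1=r\sin\theta\sin\varphi$, $x_2=r\sin\theta\cos\varphi$, $x_3=r\cos\theta$ ($r\ge0$, $-\pi\le\varphi\le\pi$, $0\le\theta\le\pi$),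 we have for each $j=0,\dots,2k+1$ $$F^{k,\pm}_j(r,\theta,\varphi)=i^{k-j}r^ke^{i(k-j)\varphi}\Big(P^{j-k}_k(\cos\theta),\ \pm\, ij\,e^{i\varphi}P^{j-k-1}_k(\cos\theta)\Big),$$ where $P^l_k(s)=\frac{1}{k!\,2^k}(1-s^2)^{l/2}\frac{d^{l+k}}{ds^{l+k}}(s^2-1)^k$ for $s\in\mathbb R$, and by convention $P^{k+1}_k=0=P^{-k-1}_k$.
   Context: $P^0_k$ is the $k$-th Legendre polynomial and $P^l_k$ are its associated Legendre functions. *)

theory Defs
  imports "HOL-Analysis.Analysis"
begin

text \<open>The complex Clifford algebra C_4, modelled concretely: an element is the coefficient
  function on blades e_A (A a subset of {1..4}); e_A = e_a1 ... e_am with a1 < ... < am.\<close>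

type_synonym cl = "nat set \<Rightarrow> complex"

definition blade_sign :: "nat set \<Rightarrow> nat set \<Rightarrow> complex" where
  "blade_sign A B = (-1) ^ (card {(a, b). a \<in> A \<and> b \<in> B \<and> b < a} + card (A \<inter> B))"

definition cl_mult :: "cl \<Rightarrow> cl \<Rightarrow> cl" (infixl "\<odot>" 70) where
  "cl_mult x y = (\<lambda>C. \<Sum>A\<in>Pow {1..4}. \<Sum>B\<in>Pow {1..4}.
      if (A - B) \<union> (B - A) = C then blade_sign A B * x A * y B else 0)"

definition cl_add :: "cl \<Rightarrow> cl \<Rightarrow> cl" where
  "cl_add x y = (\<lambda>A. x A + y A)"

definition cl_scale :: "complex \<Rightarrow> cl \<Rightarrow> cl" where
  "cl_scale c x = (\<lambda>A. c * x A)"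

definition cl_one :: cl where
  "cl_one = (\<lambda>A. if A = {} then 1 else 0)"

definition cl_gen :: "nat \<Rightarrow> cl" where
  "cl_gen j = (\<lambda>A. if A = {j} then 1 else 0)"

text \<open>Spinor basis vectors. \<open>pm = True\<close>: S^+_4, \<open>pm = False\<close>: S^-_4.\<close>

definition fac_a :: "nat \<Rightarrow> nat \<Rightarrow> cl" where
  "fac_a a b = cl_add cl_one (cl_scale (- \<i>) (cl_gen a \<odot> cl_gen b))"

definition fac_b :: "nat \<Rightarrow> nat \<Rightarrow> cl" where
  "fac_b a b = cl_add (cl_gen a) (cl_scale \<i> (cl_gen b))"

definition vplus :: "bool \<Rightarrow> cl" where
  "vplus pm = (if pm then cl_scale (1/4) (fac_a 1 2 \<odot> fac_a 3 4)
                     else cl_scale (1/4) (fac_a 1 2 \<odot> fac_b 3 4))"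

definition vminus :: "bool \<Rightarrow> cl" where
  "vminus pm = (if pm then cl_scale (1/4) (fac_b 1 2 \<odot> fac_b 3 4)
                      else cl_scale (1/4) (fac_b 1 2 \<odot> fac_a 3 4))"

type_synonym clfun = "real \<Rightarrow> real \<Rightarrow> real \<Rightarrow> cl"

definition pd1 :: "clfun \<Rightarrow> clfun" where
  "pd1 F = (\<lambda>x1 x2 x3 A. vector_derivative (\<lambda>t. F t x2 x3 A) (at x1))"

definition pd2 :: "clfun \<Rightarrow> clfun" where
  "pd2 F = (\<lambda>x1 x2 x3 A. vector_derivative (\<lambda>t. F x1 t x3 A) (at x2))"

definition pd3 :: "clfun \<Rightarrow> clfun" where
  "pd3 F = (\<lambda>x1 x2 x3 A. vector_derivative (\<lambda>t. F x1 x2 t A) (at x3))"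

definition Xminus :: "clfun \<Rightarrow> clfun" where
  "Xminus F = (\<lambda>x1 x2 x3.
     cl_add (cl_add
       (cl_scale (2 * complex_of_real x3)
          (cl_scale (1/2) (cl_add (pd1 F x1 x2 x3) (cl_scale \<i> (pd2 F x1 x2 x3)))))
       (cl_scale (- (complex_of_real x1 + \<i> * complex_of_real x2)) (pd3 F x1 x2 x3)))
     (cl_scale (1/2) (cl_add (cl_scale (-1) (cl_gen 3 \<odot> cl_gen 1))
                             (cl_scale \<i> (cl_gen 2 \<odot> cl_gen 3))) \<odot> F x1 x2 x3))"

definition F0 :: "nat \<Rightarrow> bool \<Rightarrow> clfun" where
  "F0 k pm = (\<lambda>x1 x2 x3. cl_scale (1 / (fact k * 2 ^ k) *
       (complex_of_real x1 - \<i> * complex_of_real x2) ^ k) (vplus pm))"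

definition Fkj :: "nat \<Rightarrow> bool \<Rightarrow> nat \<Rightarrow> clfun" where
  "Fkj k pm j = (Xminus ^^ j) (F0 k pm)"

text \<open>Associated Legendre functions P^l_k(s) = 1/(k! 2^k) (1-s^2)^(l/2) d^(l+k)/ds^(l+k) (s^2-1)^k,
  with (1-s^2)^(l/2) = sqrt(1-s^2)^l, and the convention P^l_k = 0 for |l| > k
  (only l = k+1 and l = -k-1 occur).\<close>

definition assoc_legendre :: "nat \<Rightarrow> int \<Rightarrow> real \<Rightarrow> real" where
  "assoc_legendre k l s =
     (if l < - int k \<or> l > int k then 0
      else 1 / (fact k * 2 ^ k) * (sqrt (1 - s\<^sup>2) powi l) *
           (deriv ^^ nat (l + int k)) (\<lambda>t. (t\<^sup>2 - 1) ^ k) s)"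

end

theory Submission
  imports Defs
begin

text \<open>Write \<open>F\<^sub>j = a\<^sub>j v\<^sup>+ + b\<^sub>j v\<^sup>-\<close>. The Clifford part of \<open>X\<^sup>-\<close> sends \<open>v\<^sup>+\<close> to \<open>\<plusminus>v\<^sup>-\<close> and
  kills \<open>v\<^sup>-\<close>, while its scalar part \<open>L = 2 x\<^sub>3 \<partial>/\<partial>zbar - z \<partial>/\<partial>x\<^sub>3\<close> is a derivation; hence
  \<open>a\<^sub>j = c\<^sub>k L\<^sup>j zbar\<^sup>k\<close> and \<open>b\<^sub>j = \<plusminus> j c\<^sub>k L\<^sup>j\<^sup>-\<^sup>1 zbar\<^sup>k\<close> with \<open>c\<^sub>k = 1/(k! 2\<^sup>k)\<close>.
  Since \<open>L\<close> maps \<open>zbar \<mapsto> 2 x\<^sub>3\<close>, \<open>x\<^sub>3 \<mapsto> -z\<close>, \<open>z \<mapsto> 0\<close>, the sequence \<open>L\<^sup>j (zbar g)\<close> obeys a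
  three-term recurrence. On the sphere \<open>|x| = r\<close>, \<open>x\<^sub>3 = r u\<close>, where \<open>z zbar = r\<^sup>2 (1 - u\<^sup>2)\<close>, it
  coincides with the recurrence satisfied by \<open>(d/du)\<^sup>j (u\<^sup>2 - 1)\<^sup>k\<close> under multiplication by
  \<open>u\<^sup>2 - 1\<close>, which gives \<open>r\<^sup>j z\<^sup>k L\<^sup>j zbar\<^sup>k = (-1)\<^sup>k\<^sup>+\<^sup>j r\<^sup>2\<^sup>k z\<^sup>j (d/du)\<^sup>j (u\<^sup>2 - 1)\<^sup>k\<close>.
  Inserting \<open>z = i r sin \<theta> e\<^sup>-\<^sup>i\<^sup>\<phi>\<close> yields the formula off the \<open>x\<^sub>3\<close>-axis; on the axis
  \<open>L\<^sup>j zbar\<^sup>k\<close> is computed directly.\<close>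

section \<open>Blades of the Clifford algebra\<close>

definition blade :: "nat set \<Rightarrow> cl" where
  "blade S = (\<lambda>C. if C = S then 1 else 0)"

lemma cl_mult_add_right: "x \<odot> cl_add y z = cl_add (x \<odot> y) (x \<odot> z)"
  unfolding cl_mult_def cl_add_def
  by (auto simp: fun_eq_iff sum.distrib[symmetric] distrib_left intro!: sum.cong)

lemma cl_mult_add_left: "cl_add x y \<odot> z = cl_add (x \<odot> z) (y \<odot> z)"
  unfolding cl_mult_def cl_add_def
  by (auto simp: fun_eq_iff sum.distrib[symmetric] distrib_left distrib_right intro!: sum.cong)

lemma cl_mult_scale_right: "x \<odot> cl_scale c y = cl_scale c (x \<odot> y)"
  unfolding cl_mult_def cl_scale_def
  by (auto simp: fun_eq_iff sum_distrib_left intro!: sum.cong)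

lemma cl_mult_scale_left: "cl_scale c x \<odot> y = cl_scale c (x \<odot> y)"
  unfolding cl_mult_def cl_scale_def
  by (auto simp: fun_eq_iff sum_distrib_left intro!: sum.cong)

lemma card_inversions_eq_sum:
  assumes "finite A" "finite B"
  shows "card {(a, b). a \<in> A \<and> b \<in> B \<and> b < a} = (\<Sum>a\<in>A. \<Sum>b\<in>B. if b < a then 1 else 0)"
proof -
  have "{(a, b). a \<in> A \<and> b \<in> B \<and> b < a} = Sigma A (\<lambda>a. B \<inter> {..<a})" by auto
  then show ?thesis
    using assms by (simp add: sum.If_cases lessThan_def)
qed

lemma blade_sign_eq_sum:
  "finite A \<Longrightarrow> finite B \<Longrightarrow>
    blade_sign A B = (-1) ^ ((\<Sum>a\<in>A. \<Sum>b\<in>B. if b < a then 1 else 0) + card (A \<inter> B))"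
  by (simp add: blade_sign_def card_inversions_eq_sum)

lemma blade_mult_blade:
  assumes "A \<subseteq> {1..4}" "B \<subseteq> {1..4}"
  shows "blade A \<odot> blade B = cl_scale (blade_sign A B) (blade ((A - B) \<union> (B - A)))"
proof
  fix C
  have "(blade A \<odot> blade B) C = (\<Sum>A'\<in>Pow {1..4}. \<Sum>B'\<in>Pow {1..4}. if A' = A then
      (if B' = B then (if (A - B) \<union> (B - A) = C then blade_sign A B else 0) else 0) else 0)"
    unfolding cl_mult_def blade_def
    by (intro sum.cong refl, rename_tac A' B', case_tac "A' = A"; case_tac "B' = B"; simp)
  also have "\<dots> = (\<Sum>A'\<in>Pow {1..4}. if A' = A then (\<Sum>B'\<in>Pow {1..4}.
      if B' = B then (if (A - B) \<union> (B - A) = C then blade_sign A B else 0) else 0) else 0)"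
    by (intro sum.cong refl) auto
  also have "\<dots> = (if (A - B) \<union> (B - A) = C then blade_sign A B else 0)"
    using assms by simp
  finally show "(blade A \<odot> blade B) C = cl_scale (blade_sign A B) (blade ((A - B) \<union> (B - A))) C"
    by (auto simp: cl_scale_def blade_def)
qed

lemma cl_one_eq_blade: "cl_one = blade {}"
  by (simp add: cl_one_def blade_def fun_eq_iff)

lemma cl_gen_eq_blade: "cl_gen j = blade {j}"
  by (simp add: cl_gen_def blade_def fun_eq_iff)

definition Xminus_clifford :: cl where
  "Xminus_clifford = cl_scale (1/2)
     (cl_add (cl_scale (-1) (cl_gen 3 \<odot> cl_gen 1)) (cl_scale \<i> (cl_gen 2 \<odot> cl_gen 3)))"

lemmas cl_blade_simps = cl_mult_add_right cl_mult_add_left cl_mult_scale_right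
  cl_mult_scale_left blade_mult_blade cl_one_eq_blade cl_gen_eq_blade blade_sign_eq_sum
  insert_Diff_if insert_commute

lemma Xminus_clifford_mult_vplus:
  "Xminus_clifford \<odot> vplus pm = cl_scale (if pm then 1 else -1) (vminus pm)"
  unfolding vplus_def vminus_def fac_a_def fac_b_def Xminus_clifford_def
  by (cases pm; simp add: cl_blade_simps; rule ext; simp add: cl_add_def cl_scale_def algebra_simps)

lemma Xminus_clifford_mult_vminus: "Xminus_clifford \<odot> vminus pm = (\<lambda>_. 0)"
  unfolding vplus_def vminus_def fac_a_def fac_b_def Xminus_clifford_def
  by (cases pm; simp add: cl_blade_simps; rule ext; simp add: cl_add_def cl_scale_def algebra_simps)

section \<open>Polynomial functions on \<open>\<real>\<^sup>3\<close> and the scalar part of \<open>X\<^sup>-\<close>\<close>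

type_synonym cfun3 = "real \<Rightarrow> real \<Rightarrow> real \<Rightarrow> complex"

inductive poly3 :: "cfun3 \<Rightarrow> bool" where
  poly3_const: "poly3 (\<lambda>x y z. c)"
| poly3_x: "poly3 (\<lambda>x y z. complex_of_real x)"
| poly3_y: "poly3 (\<lambda>x y z. complex_of_real y)"
| poly3_z: "poly3 (\<lambda>x y z. complex_of_real z)"
| poly3_add: "poly3 f \<Longrightarrow> poly3 g \<Longrightarrow> poly3 (\<lambda>x y z. f x y z + g x y z)"
| poly3_diff: "poly3 f \<Longrightarrow> poly3 g \<Longrightarrow> poly3 (\<lambda>x y z. f x y z - g x y z)"
| poly3_mult: "poly3 f \<Longrightarrow> poly3 g \<Longrightarrow> poly3 (\<lambda>x y z. f x y z * g x y z)"

lemma poly3_power: "poly3 f \<Longrightarrow> poly3 (\<lambda>x y z. f x y z ^ k)"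
  by (induction k) (auto intro: poly3.intros)

definition partial1 :: "cfun3 \<Rightarrow> cfun3" where
  "partial1 f = (\<lambda>x y z. vector_derivative (\<lambda>t. f t y z) (at x))"

definition partial2 :: "cfun3 \<Rightarrow> cfun3" where
  "partial2 f = (\<lambda>x y z. vector_derivative (\<lambda>t. f x t z) (at y))"

definition partial3 :: "cfun3 \<Rightarrow> cfun3" where
  "partial3 f = (\<lambda>x y z. vector_derivative (\<lambda>t. f x y t) (at z))"

definition has_partials :: "cfun3 \<Rightarrow> cfun3 \<Rightarrow> cfun3 \<Rightarrow> cfun3 \<Rightarrow> bool" where
  "has_partials f f1 f2 f3 \<longleftrightarrow> (\<forall>x y z.
     ((\<lambda>t. f t y z) has_vector_derivative f1 x y z) (at x) \<and>
     ((\<lambda>t. f x t z) has_vector_derivative f2 x y z) (at y) \<and>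
     ((\<lambda>t. f x y t) has_vector_derivative f3 x y z) (at z))"

lemma has_partials_imp_partials:
  "has_partials f f1 f2 f3 \<Longrightarrow> partial1 f = f1 \<and> partial2 f = f2 \<and> partial3 f = f3"
  by (auto simp: has_partials_def partial1_def partial2_def partial3_def fun_eq_iff
      intro: vector_derivative_at)

lemma has_vector_derivative_complex_of_real:
  "((\<lambda>t. complex_of_real t) has_vector_derivative 1) (at x)"
  using has_vector_derivative_of_real[OF DERIV_ident, of "at x"] by simp

lemma has_partials_const: "has_partials (\<lambda>x y z. c) (\<lambda>x y z. 0) (\<lambda>x y z. 0) (\<lambda>x y z. 0)"
  and has_partials_x: "has_partials (\<lambda>x y z. complex_of_real x) (\<lambda>x y z. 1) (\<lambda>x y z. 0) (\<lambda>x y z. 0)"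
  and has_partials_y: "has_partials (\<lambda>x y z. complex_of_real y) (\<lambda>x y z. 0) (\<lambda>x y z. 1) (\<lambda>x y z. 0)"
  and has_partials_z: "has_partials (\<lambda>x y z. complex_of_real z) (\<lambda>x y z. 0) (\<lambda>x y z. 0) (\<lambda>x y z. 1)"
  by (auto simp: has_partials_def has_vector_derivative_complex_of_real)

lemma has_partials_add:
  "has_partials f f1 f2 f3 \<Longrightarrow> has_partials g g1 g2 g3 \<Longrightarrow>
    has_partials (\<lambda>x y z. f x y z + g x y z) (\<lambda>x y z. f1 x y z + g1 x y z)
      (\<lambda>x y z. f2 x y z + g2 x y z) (\<lambda>x y z. f3 x y z + g3 x y z)"
  by (auto simp: has_partials_def intro!: derivative_intros)

lemma has_partials_diff:
  "has_partials f f1 f2 f3 \<Longrightarrow> has_partials g g1 g2 g3 \<Longrightarrow>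
    has_partials (\<lambda>x y z. f x y z - g x y z) (\<lambda>x y z. f1 x y z - g1 x y z)
      (\<lambda>x y z. f2 x y z - g2 x y z) (\<lambda>x y z. f3 x y z - g3 x y z)"
  by (auto simp: has_partials_def intro!: derivative_intros)

lemma has_partials_mult:
  "has_partials f f1 f2 f3 \<Longrightarrow> has_partials g g1 g2 g3 \<Longrightarrow>
    has_partials (\<lambda>x y z. f x y z * g x y z) (\<lambda>x y z. f x y z * g1 x y z + f1 x y z * g x y z)
      (\<lambda>x y z. f x y z * g2 x y z + f2 x y z * g x y z)
      (\<lambda>x y z. f x y z * g3 x y z + f3 x y z * g x y z)"
  by (auto simp: has_partials_def intro!: has_vector_derivative_mult)

lemma has_partials_poly3_closed:
  assumes "has_partials f f1 f2 f3" "poly3 f1" "poly3 f2" "poly3 f3"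
  shows "has_partials f (partial1 f) (partial2 f) (partial3 f) \<and>
    poly3 (partial1 f) \<and> poly3 (partial2 f) \<and> poly3 (partial3 f)"
  using assms by (simp add: has_partials_imp_partials)

lemma poly3_has_partials:
  assumes "poly3 f"
  shows "has_partials f (partial1 f) (partial2 f) (partial3 f) \<and>
    poly3 (partial1 f) \<and> poly3 (partial2 f) \<and> poly3 (partial3 f)"
  using assms
proof induction
  case (poly3_add f g)
  show ?case
    by (rule has_partials_poly3_closed[OF has_partials_add])
      (use poly3_add in \<open>auto intro: poly3.intros\<close>)
next
  case (poly3_diff f g)
  show ?case
    by (rule has_partials_poly3_closed[OF has_partials_diff])
      (use poly3_diff in \<open>auto intro: poly3.intros\<close>)
next
  case (poly3_mult f g)
  show ?case
    by (rule has_partials_poly3_closed[OF has_partials_mult])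
      (use poly3_mult in \<open>auto intro: poly3.intros\<close>)
qed (rule has_partials_poly3_closed,
    (rule has_partials_const has_partials_x has_partials_y has_partials_z poly3_const)+)+

text \<open>The scalar part of \<open>Xminus\<close>: \<open>2 x3 \<partial>/\<partial>zbar - z \<partial>/\<partial>x3\<close> with \<open>z = x1 + i x2\<close>.\<close>

definition Xminus_scalar :: "cfun3 \<Rightarrow> cfun3" where
  "Xminus_scalar f = (\<lambda>x y z. complex_of_real z * (partial1 f x y z + \<i> * partial2 f x y z)
     - (complex_of_real x + \<i> * complex_of_real y) * partial3 f x y z)"

lemma Xminus_scalar_eq:
  "has_partials f f1 f2 f3 \<Longrightarrow> Xminus_scalar f = (\<lambda>x y z. complex_of_real z *
     (f1 x y z + \<i> * f2 x y z) - (complex_of_real x + \<i> * complex_of_real y) * f3 x y z)"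
  by (simp add: Xminus_scalar_def has_partials_imp_partials)

lemmas poly3_imp_has_partials = poly3_has_partials[THEN conjunct1]

lemma poly3_Xminus_scalar: "poly3 f \<Longrightarrow> poly3 (Xminus_scalar f)"
  unfolding Xminus_scalar_def using poly3_has_partials[of f] by (auto intro!: poly3.intros)

lemma poly3_Xminus_scalar_iter: "poly3 f \<Longrightarrow> poly3 ((Xminus_scalar ^^ j) f)"
  by (induction j) (auto intro: poly3_Xminus_scalar)

lemma Xminus_scalar_add:
  assumes "poly3 f" "poly3 g"
  shows "Xminus_scalar (\<lambda>x y z. f x y z + g x y z) =
    (\<lambda>x y z. Xminus_scalar f x y z + Xminus_scalar g x y z)"
proof -
  note df = poly3_imp_has_partials[OF assms(1)] and dg = poly3_imp_has_partials[OF assms(2)]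
  show ?thesis
    unfolding Xminus_scalar_eq[OF has_partials_add[OF df dg]] Xminus_scalar_eq[OF df]
      Xminus_scalar_eq[OF dg]
    by (simp add: fun_eq_iff algebra_simps)
qed

lemma Xminus_scalar_diff:
  assumes "poly3 f" "poly3 g"
  shows "Xminus_scalar (\<lambda>x y z. f x y z - g x y z) =
    (\<lambda>x y z. Xminus_scalar f x y z - Xminus_scalar g x y z)"
proof -
  note df = poly3_imp_has_partials[OF assms(1)] and dg = poly3_imp_has_partials[OF assms(2)]
  show ?thesis
    unfolding Xminus_scalar_eq[OF has_partials_diff[OF df dg]] Xminus_scalar_eq[OF df]
      Xminus_scalar_eq[OF dg]
    by (simp add: fun_eq_iff algebra_simps)
qed

lemma Xminus_scalar_mult:
  assumes "poly3 f" "poly3 g"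
  shows "Xminus_scalar (\<lambda>x y z. f x y z * g x y z) =
    (\<lambda>x y z. Xminus_scalar f x y z * g x y z + f x y z * Xminus_scalar g x y z)"
proof -
  note df = poly3_imp_has_partials[OF assms(1)] and dg = poly3_imp_has_partials[OF assms(2)]
  show ?thesis
    unfolding Xminus_scalar_eq[OF has_partials_mult[OF df dg]] Xminus_scalar_eq[OF df]
      Xminus_scalar_eq[OF dg]
    by (simp add: fun_eq_iff algebra_simps)
qed

lemma Xminus_scalar_const: "Xminus_scalar (\<lambda>x y z. c) = (\<lambda>x y z. 0)"
  by (simp add: Xminus_scalar_eq[OF has_partials_const])

lemma Xminus_scalar_cmult:
  "poly3 f \<Longrightarrow> Xminus_scalar (\<lambda>x y z. c * f x y z) = (\<lambda>x y z. c * Xminus_scalar f x y z)"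
  using Xminus_scalar_mult[OF poly3_const, of f c] by (simp add: Xminus_scalar_const)

lemma Xminus_scalar_iter_const:
  "(Xminus_scalar ^^ j) (\<lambda>x y z. c) = (\<lambda>x y z. if j = 0 then c else 0)"
  by (induction j) (auto simp: Xminus_scalar_const)

abbreviation zbar_coord :: cfun3 where
  "zbar_coord \<equiv> \<lambda>x y z. complex_of_real x - \<i> * complex_of_real y"

abbreviation z_coord :: cfun3 where
  "z_coord \<equiv> \<lambda>x y z. complex_of_real x + \<i> * complex_of_real y"

lemma poly3_zbar_coord: "poly3 zbar_coord"
  by (intro poly3.intros)

lemma z_coord_mult_zbar_coord: "z_coord x y z * zbar_coord x y z = complex_of_real (x\<^sup>2 + y\<^sup>2)"
  by (simp add: algebra_simps power2_eq_square complex_eq_iff)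

lemma zbar_coord_pow_Suc:
  "(\<lambda>x y z. zbar_coord x y z ^ Suc k) = (\<lambda>x y z. zbar_coord x y z * zbar_coord x y z ^ k)"
  by simp

lemma Xminus_scalar_x1: "Xminus_scalar (\<lambda>x y z. complex_of_real x) = (\<lambda>x y z. complex_of_real z)"
  by (simp add: Xminus_scalar_eq[OF has_partials_x])

lemma Xminus_scalar_x2:
  "Xminus_scalar (\<lambda>x y z. complex_of_real y) = (\<lambda>x y z. \<i> * complex_of_real z)"
  by (simp add: Xminus_scalar_eq[OF has_partials_y] mult.commute)

lemma Xminus_scalar_x3:
  "Xminus_scalar (\<lambda>x y z. complex_of_real z) = (\<lambda>x y z. - z_coord x y z)"
  by (simp add: Xminus_scalar_eq[OF has_partials_z])

text \<open>The iterated product rule has only three terms because \<open>Xminus_scalar\<close> maps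
  \<open>zbar \<mapsto> 2 x3\<close>, \<open>x3 \<mapsto> -z\<close> and \<open>z \<mapsto> 0\<close>.\<close>

lemma Xminus_scalar_iter_zbar_mult:
  assumes g: "poly3 g"
  shows "(Xminus_scalar ^^ j) (\<lambda>x y z. zbar_coord x y z * g x y z) =
    (\<lambda>x y z. zbar_coord x y z * (Xminus_scalar ^^ j) g x y z
      + 2 * of_nat j * complex_of_real z * (Xminus_scalar ^^ (j - 1)) g x y z
      - of_nat (j * (j - 1)) * z_coord x y z * (Xminus_scalar ^^ (j - 2)) g x y z)"
proof (induction j)
  case 0
  then show ?case by simp
next
  case (Suc j)
  have poly3_iter: "poly3 ((Xminus_scalar ^^ i) g)" for i
    using g by (rule poly3_Xminus_scalar_iter)
  have "(Xminus_scalar ^^ Suc j) (\<lambda>x y z. zbar_coord x y z * g x y z) =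
    (\<lambda>x y z. zbar_coord x y z * Xminus_scalar ((Xminus_scalar ^^ j) g) x y z
      + 2 * complex_of_real z * (Xminus_scalar ^^ j) g x y z
      - 2 * of_nat j * z_coord x y z * (Xminus_scalar ^^ (j - 1)) g x y z
      + 2 * of_nat j * complex_of_real z * Xminus_scalar ((Xminus_scalar ^^ (j - 1)) g) x y z
      - of_nat (j * (j - 1)) * z_coord x y z * Xminus_scalar ((Xminus_scalar ^^ (j - 2)) g) x y z)"
    unfolding funpow.simps(2) o_apply Suc.IH
    by (simp add: Xminus_scalar_add Xminus_scalar_diff Xminus_scalar_mult poly3.intros poly3_iter
        Xminus_scalar_const Xminus_scalar_x1 Xminus_scalar_x2 Xminus_scalar_x3 fun_eq_iff
        algebra_simps)
  also have "\<dots> = (\<lambda>x y z. zbar_coord x y z * (Xminus_scalar ^^ Suc j) g x y z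
      + 2 * of_nat (Suc j) * complex_of_real z * (Xminus_scalar ^^ (Suc j - 1)) g x y z
      - of_nat (Suc j * (Suc j - 1)) * z_coord x y z * (Xminus_scalar ^^ (Suc j - 2)) g x y z)"
    by (cases j; cases "j - 1") (auto simp: fun_eq_iff algebra_simps)
  finally show ?case .
qed

section \<open>Derivatives of \<open>(u\<^sup>2 - 1)\<^sup>k\<close>\<close>

lemma higher_pderiv_mult_legendre_factor:
  fixes p :: "real poly"
  shows "(pderiv ^^ j) ([:-1, 0, 1:] * p) = [:-1, 0, 1:] * (pderiv ^^ j) p
    + smult (2 * of_nat j) ([:0, 1:] * (pderiv ^^ (j - 1)) p)
    + smult (of_nat (j * (j - 1))) ((pderiv ^^ (j - 2)) p)"
proof (induction j)
  case 0
  then show ?case by simp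
next
  case (Suc j)
  have "(pderiv ^^ Suc j) ([:-1, 0, 1:] * p) = [:-1, 0, 1:] * pderiv ((pderiv ^^ j) p)
      + [:0, 2:] * (pderiv ^^ j) p
      + smult (2 * of_nat j) ((pderiv ^^ (j - 1)) p + [:0, 1:] * pderiv ((pderiv ^^ (j - 1)) p))
      + smult (of_nat (j * (j - 1))) (pderiv ((pderiv ^^ (j - 2)) p))"
    unfolding funpow.simps(2) o_apply Suc.IH
    by (simp add: pderiv_add pderiv_diff pderiv_mult pderiv_smult pderiv_pCons numeral_poly
        algebra_simps smult_add_right)
  also have "\<dots> = [:-1, 0, 1:] * (pderiv ^^ Suc j) p
      + smult (2 * of_nat (Suc j)) ([:0, 1:] * (pderiv ^^ (Suc j - 1)) p)
      + smult (of_nat (Suc j * (Suc j - 1))) ((pderiv ^^ (Suc j - 2)) p)"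
    by (cases j; cases "j - 1"; intro poly_eq_poly_eq_iff[THEN iffD1] ext)
      (simp_all add: algebra_simps)
  finally show ?case .
qed

text \<open>\<open>legendre_deriv k j u\<close> is \<open>(d/du)^j (u\<^sup>2 - 1)^k\<close>, taken as a polynomial so that it is
  defined at every \<open>u\<close> without differentiability side conditions.\<close>

definition legendre_deriv :: "nat \<Rightarrow> nat \<Rightarrow> real \<Rightarrow> real" where
  "legendre_deriv k j u = poly ((pderiv ^^ j) ([:-1, 0, 1:] ^ k)) u"

lemma legendre_deriv_0: "legendre_deriv 0 j u = (if j = 0 then 1 else 0)"
proof -
  have "(pderiv ^^ j) (1::real poly) = (if j = 0 then 1 else 0)"
    by (induction j) (auto simp: pderiv_1)
  then show ?thesis by (simp add: legendre_deriv_def)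
qed

lemma legendre_deriv_Suc:
  "legendre_deriv (Suc k) j u = (u\<^sup>2 - 1) * legendre_deriv k j u
    + 2 * of_nat j * u * legendre_deriv k (j - 1) u
    + of_nat (j * (j - 1)) * legendre_deriv k (j - 2) u"
  by (simp only: legendre_deriv_def power_Suc higher_pderiv_mult_legendre_factor)
    (simp add: power2_eq_square algebra_simps)

lemma legendre_deriv_eq_0:
  assumes "2 * k < j"
  shows "legendre_deriv k j u = 0"
proof -
  have "degree ([:-1, 0, 1:] ^ k :: real poly) = 2 * k"
    by (simp add: degree_power_eq)
  then have "(pderiv ^^ j) ([:-1, 0, 1:] ^ k :: real poly) = 0"
    using assms by (intro poly_eqI) (simp add: coeff_higher_pderiv coeff_eq_0)
  then show ?thesis by (simp add: legendre_deriv_def)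
qed

lemma legendre_deriv_at_pm1:
  assumes u: "u\<^sup>2 = (1::real)"
  shows "j \<le> k \<Longrightarrow> legendre_deriv k j u = (if j < k then 0 else fact k * (2 * u) ^ k)"
proof (induction k arbitrary: j)
  case 0
  then show ?case by (simp add: legendre_deriv_0)
next
  case (Suc k)
  consider "j = 0" | "j = 1" | i where "j = Suc (Suc i)"
    by (metis One_nat_def not0_implies_Suc)
  then show ?case
  proof cases
    case 1
    then show ?thesis using u by (simp add: legendre_deriv_Suc)
  next
    case 2
    then show ?thesis using u Suc.IH[of 0] by (simp add: legendre_deriv_Suc)
  next
    case (3 i)
    then show ?thesis using Suc.prems u Suc.IH[of i] Suc.IH[of "Suc i"]
      by (auto simp: legendre_deriv_Suc algebra_simps)
  qed
qed

lemma higher_deriv_poly: "(deriv ^^ j) (poly p) = poly ((pderiv ^^ j) (p :: real poly))"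
proof (induction j)
  case (Suc j)
  then show ?case by (auto intro!: DERIV_imp_deriv poly_DERIV)
qed simp

lemma higher_deriv_legendre: "(deriv ^^ j) (\<lambda>t::real. (t\<^sup>2 - 1) ^ k) u = legendre_deriv k j u"
proof -
  have "(\<lambda>t::real. (t\<^sup>2 - 1) ^ k) = poly ([:-1, 0, 1:] ^ k)"
    by (simp add: fun_eq_iff poly_power power2_eq_square algebra_simps)
  then show ?thesis by (simp add: higher_deriv_poly legendre_deriv_def)
qed

lemma assoc_legendre_cos:
  assumes "j \<le> 2 * k + 1" "0 \<le> \<theta>" "\<theta> \<le> pi"
  shows "assoc_legendre k (int j - int k) (cos \<theta>) =
    1 / (fact k * 2 ^ k) * sin \<theta> powi (int j - int k) * legendre_deriv k j (cos \<theta>)"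
proof (cases "j = 2 * k + 1")
  case True
  then show ?thesis by (simp add: assoc_legendre_def legendre_deriv_eq_0)
next
  case False
  have "sqrt (1 - (cos \<theta>)\<^sup>2) = sin \<theta>"
    using sin_ge_zero[OF assms(2,3)] by (simp add: sin_squared_eq[symmetric])
  moreover have "nat (int j - int k + int k) = j" by simp
  ultimately show ?thesis
    using assms(1) False unfolding assoc_legendre_def higher_deriv_legendre by auto
qed

section \<open>The spinor components of \<open>F\<^sub>j\<close>\<close>

definition spinor_fun :: "bool \<Rightarrow> cfun3 \<Rightarrow> cfun3 \<Rightarrow> clfun" where
  "spinor_fun pm a b =
     (\<lambda>x y z. cl_add (cl_scale (a x y z) (vplus pm)) (cl_scale (b x y z) (vminus pm)))"

lemma pd_spinor_fun:
  assumes "poly3 a" "poly3 b"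
  shows "pd1 (spinor_fun pm a b) = spinor_fun pm (partial1 a) (partial1 b)"
    and "pd2 (spinor_fun pm a b) = spinor_fun pm (partial2 a) (partial2 b)"
    and "pd3 (spinor_fun pm a b) = spinor_fun pm (partial3 a) (partial3 b)"
  using assms[THEN poly3_imp_has_partials]
  unfolding pd1_def pd2_def pd3_def spinor_fun_def cl_add_def cl_scale_def has_partials_def
  by (auto simp: fun_eq_iff intro!: vector_derivative_at has_vector_derivative_add
      has_vector_derivative_mult_left)

lemma Xminus_spinor_fun:
  assumes "poly3 a" "poly3 b"
  shows "Xminus (spinor_fun pm a b) = spinor_fun pm (Xminus_scalar a)
    (\<lambda>x y z. Xminus_scalar b x y z + (if pm then 1 else -1) * a x y z)"
proof -
  have "Xminus_clifford \<odot> spinor_fun pm a b x y z =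
      cl_scale ((if pm then 1 else -1) * a x y z) (vminus pm)" for x y z
    unfolding spinor_fun_def cl_mult_add_right cl_mult_scale_right
      Xminus_clifford_mult_vplus Xminus_clifford_mult_vminus
    by (simp add: cl_add_def cl_scale_def fun_eq_iff)
  then show ?thesis
    unfolding Xminus_def pd_spinor_fun[OF assms] Xminus_clifford_def[symmetric]
    by (simp add: spinor_fun_def Xminus_scalar_def cl_add_def cl_scale_def fun_eq_iff
        algebra_simps)
qed

lemma Fkj_eq_spinor_fun:
  "Fkj k pm j = spinor_fun pm
     (\<lambda>x y z. 1 / (fact k * 2 ^ k) * (Xminus_scalar ^^ j) (\<lambda>x y z. zbar_coord x y z ^ k) x y z)
     (\<lambda>x y z. (if pm then 1 else -1) * of_nat j * (1 / (fact k * 2 ^ k)) *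
        (Xminus_scalar ^^ (j - 1)) (\<lambda>x y z. zbar_coord x y z ^ k) x y z)"
proof (induction j)
  case 0
  show ?case
    by (simp add: Fkj_def F0_def spinor_fun_def cl_add_def cl_scale_def fun_eq_iff)
next
  case (Suc j)
  define c :: complex where "c = 1 / (fact k * 2 ^ k)"
  define s :: complex where "s = (if pm then 1 else -1)"
  define h where "h = (\<lambda>x y z. zbar_coord x y z ^ k)"
  have h: "poly3 ((Xminus_scalar ^^ i) h)" for i
    unfolding h_def by (intro poly3_Xminus_scalar_iter poly3_power poly3.intros)
  have "Fkj k pm (Suc j) = Xminus (Fkj k pm j)"
    by (simp add: Fkj_def)
  also have "\<dots> = spinor_fun pm (\<lambda>x y z. c * (Xminus_scalar ^^ Suc j) h x y z)
      (\<lambda>x y z. s * of_nat j * c * Xminus_scalar ((Xminus_scalar ^^ (j - 1)) h) x y z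
        + s * (c * (Xminus_scalar ^^ j) h x y z))"
    unfolding Suc c_def[symmetric] s_def[symmetric] h_def[symmetric]
    by (simp add: Xminus_spinor_fun poly3.intros h Xminus_scalar_cmult s_def)
  also have "\<dots> = spinor_fun pm (\<lambda>x y z. c * (Xminus_scalar ^^ Suc j) h x y z)
      (\<lambda>x y z. s * of_nat (Suc j) * c * (Xminus_scalar ^^ (Suc j - 1)) h x y z)"
    by (cases j) (simp_all add: algebra_simps)
  finally show ?case
    unfolding c_def s_def h_def .
qed

section \<open>Evaluation in spherical coordinates\<close>

lemma legendre_recurrence_step:
  fixes R U V W :: "'a::comm_ring_1" and A d :: "nat \<Rightarrow> 'a"
  assumes WV: "W * V = R\<^sup>2 - R\<^sup>2 * U\<^sup>2"
    and IH: "\<And>i. R ^ i * W ^ k * A i = (-1) ^ (k + i) * R ^ (2 * k) * W ^ i * d i"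
  shows "R ^ j * W ^ Suc k * (V * A j + 2 * of_nat j * (R * U) * A (j - 1)
      - of_nat (j * (j - 1)) * W * A (j - 2)) =
    (-1) ^ (Suc k + j) * R ^ (2 * Suc k) * W ^ j * ((U\<^sup>2 - 1) * d j
      + 2 * of_nat j * U * d (j - 1) + of_nat (j * (j - 1)) * d (j - 2))"
proof -
  consider "j = 0" | "j = 1" | n where "j = Suc (Suc n)"
    by (metis One_nat_def not0_implies_Suc)
  then show ?thesis
  proof cases
    case 1
    have "R ^ j * W ^ Suc k * (V * A j + 2 * of_nat j * (R * U) * A (j - 1)
        - of_nat (j * (j - 1)) * W * A (j - 2)) = (W * V) * (R ^ 0 * W ^ k * A 0)"
      using 1 by (simp add: algebra_simps)
    also have "\<dots> = (R\<^sup>2 - R\<^sup>2 * U\<^sup>2) * ((-1) ^ (k + 0) * R ^ (2 * k) * W ^ 0 * d 0)"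
      by (simp only: WV IH)
    finally show ?thesis using 1 by (simp add: algebra_simps power2_eq_square)
  next
    case 2
    have "R ^ j * W ^ Suc k * (V * A j + 2 * of_nat j * (R * U) * A (j - 1)
        - of_nat (j * (j - 1)) * W * A (j - 2)) = (W * V) * (R ^ 1 * W ^ k * A 1)
        + 2 * U * R * R * W * (R ^ 0 * W ^ k * A 0)"
      using 2 by (simp add: algebra_simps)
    also have "\<dots> = (R\<^sup>2 - R\<^sup>2 * U\<^sup>2) * ((-1) ^ (k + 1) * R ^ (2 * k) * W ^ 1 * d 1)
        + 2 * U * R * R * W * ((-1) ^ (k + 0) * R ^ (2 * k) * W ^ 0 * d 0)"
      by (simp only: WV IH)
    finally show ?thesis using 2 by (simp add: algebra_simps power2_eq_square)
  next
    case (3 n)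
    have "R ^ j * W ^ Suc k * (V * A j + 2 * of_nat j * (R * U) * A (j - 1)
        - of_nat (j * (j - 1)) * W * A (j - 2)) = (W * V) * (R ^ Suc (Suc n) * W ^ k * A (Suc (Suc n)))
        + 2 * of_nat j * U * R * R * W * (R ^ Suc n * W ^ k * A (Suc n))
        - of_nat (j * (j - 1)) * W * W * R * R * (R ^ n * W ^ k * A n)"
      using 3 by (simp add: algebra_simps)
    also have "\<dots> = (R\<^sup>2 - R\<^sup>2 * U\<^sup>2)
          * ((-1) ^ (k + Suc (Suc n)) * R ^ (2 * k) * W ^ Suc (Suc n) * d (Suc (Suc n)))
        + 2 * of_nat j * U * R * R * W * ((-1) ^ (k + Suc n) * R ^ (2 * k) * W ^ Suc n * d (Suc n))
        - of_nat (j * (j - 1)) * W * W * R * R * ((-1) ^ (k + n) * R ^ (2 * k) * W ^ n * d n)"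
      by (simp only: WV IH)
    finally show ?thesis using 3 by (simp add: algebra_simps power2_eq_square)
  qed
qed

lemma Xminus_scalar_iter_zbar_pow_on_sphere:
  assumes "r\<^sup>2 = x\<^sup>2 + y\<^sup>2 + (r * u)\<^sup>2"
  shows "complex_of_real r ^ j * z_coord x y (r * u) ^ k
      * (Xminus_scalar ^^ j) (\<lambda>x y z. zbar_coord x y z ^ k) x y (r * u)
    = (-1) ^ (k + j) * complex_of_real r ^ (2 * k) * z_coord x y (r * u) ^ j
      * complex_of_real (legendre_deriv k j u)"
proof (induction k arbitrary: j)
  case 0
  have "(\<lambda>x y z. zbar_coord x y z ^ 0) = (\<lambda>x y z. 1)" by simp
  then show ?case by (simp add: Xminus_scalar_iter_const legendre_deriv_0)
next
  case (Suc k)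
  define A where "A i = (Xminus_scalar ^^ i) (\<lambda>x y z. zbar_coord x y z ^ k) x y (r * u)" for i
  define R where "R = complex_of_real r"
  define U where "U = complex_of_real u"
  define W where "W = z_coord x y (r * u)"
  have "W * zbar_coord x y (r * u) = R\<^sup>2 - R\<^sup>2 * U\<^sup>2"
  proof -
    have "x\<^sup>2 + y\<^sup>2 = r\<^sup>2 - r\<^sup>2 * u\<^sup>2" using assms by (simp add: power_mult_distrib)
    then show ?thesis unfolding W_def R_def U_def z_coord_mult_zbar_coord by simp
  qed
  from legendre_recurrence_step[OF this, of k A "\<lambda>i. complex_of_real (legendre_deriv k i u)" j]
  show ?case
    using Suc.IH unfolding zbar_coord_pow_Suc
    by (simp add: Xminus_scalar_iter_zbar_mult poly3_power poly3.intros legendre_deriv_Suc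
        A_def R_def U_def W_def)
qed

lemma Xminus_scalar_iter_zbar_pow_on_axis:
  "(Xminus_scalar ^^ j) (\<lambda>x y z. zbar_coord x y z ^ k) 0 0 z =
    (if j = k then fact k * 2 ^ k * complex_of_real z ^ k else 0)"
proof (induction k arbitrary: j)
  case 0
  have "(\<lambda>x y z. zbar_coord x y z ^ 0) = (\<lambda>x y z. 1)" by simp
  then show ?case by (simp add: Xminus_scalar_iter_const)
next
  case (Suc k)
  then show ?case
    unfolding zbar_coord_pow_Suc Xminus_scalar_iter_zbar_mult[OF poly3_power[OF poly3_zbar_coord]]
    by (cases j) (simp_all add: algebra_simps)
qed

lemma neg_one_power_mult_i_powi: "(-1) ^ (k + j) * \<i> powi (int j - int k) = \<i> powi (int k - int j)"
proof -
  have "2 * int k + 2 * int j = int (2 * (k + j))" by simp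
  then have "(-1::complex) ^ (k + j) = \<i> powi (2 * int k + 2 * int j)"
    by (simp only: power_int_of_nat power_mult) simp
  then have "(-1) ^ (k + j) * \<i> powi (int j - int k) = \<i> powi (int k - int j) * \<i> powi (4 * int j)"
    by (simp flip: power_int_add)
  also have "\<i> powi (4 * int j) = 1"
    by (simp add: power_int_mult)
  finally show ?thesis by simp
qed

lemma solve_sphere_identity:
  fixes R S E L D :: complex
  assumes nz: "R \<noteq> 0" "S \<noteq> 0" "E \<noteq> 0"
    and h: "R ^ j * (\<i> * R * S / E) ^ k * L = (-1) ^ (k + j) * R ^ (2 * k) * (\<i> * R * S / E) ^ j * D"
  shows "L = \<i> powi (int k - int j) * R ^ k * E powi (int k - int j) * S powi (int j - int k) * D"
proof -
  define W where "W = \<i> * R * S / E"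
  define n where "n = int j - int k"
  have W: "W \<noteq> 0" using nz by (simp add: W_def)
  have R2k: "R ^ (2 * k) = R ^ j * R powi (int k - n)"
    using nz by (simp add: n_def flip: power_int_of_nat power_int_add)
  have Wj: "W ^ j = W ^ k * W powi n"
    using W by (simp add: n_def flip: power_int_of_nat power_int_add)
  have "R ^ j * W ^ k * L = R ^ j * W ^ k * ((-1) ^ (k + j) * R powi (int k - n) * W powi n * D)"
    using h unfolding W_def[symmetric] R2k Wj by (simp add: ac_simps)
  then have "L = (-1) ^ (k + j) * R powi (int k - n) * W powi n * D"
    using nz W by simp
  also have "\<dots> = (-1) ^ (k + j) * \<i> powi n * (R powi (int k - n) * R powi n) * E powi (- n) * S powi n * D"
    by (simp add: W_def power_int_mult_distrib power_int_divide_distrib power_int_minus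
        power_int_inverse divide_inverse ac_simps)
  also have "R powi (int k - n) * R powi n = R ^ k"
    using nz by (simp flip: power_int_add)
  finally show ?thesis
    using neg_one_power_mult_i_powi[of k j] by (simp add: n_def ac_simps)
qed

lemma z_coord_spherical:
  "z_coord (r * sin \<theta> * sin \<phi>) (r * sin \<theta> * cos \<phi>) (r * cos \<theta>) =
    \<i> * complex_of_real r * complex_of_real (sin \<theta>) / cis \<phi>"
proof -
  have "r * sin \<theta> * (sin \<phi>)\<^sup>2 + r * sin \<theta> * (cos \<phi>)\<^sup>2 = r * sin \<theta>"
    by (simp flip: distrib_left)
  then have "cis \<phi> * z_coord (r * sin \<theta> * sin \<phi>) (r * sin \<theta> * cos \<phi>) (r * cos \<theta>) =
      \<i> * complex_of_real r * complex_of_real (sin \<theta>)"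
    by (simp add: complex_eq_iff algebra_simps power2_eq_square)
  then show ?thesis by (simp add: field_simps)
qed

lemma Xminus_scalar_iter_zbar_pow_polar_axis:
  assumes axis: "r = 0 \<or> sin \<theta> = 0" and j: "j \<le> 2 * k + 1"
  shows "(Xminus_scalar ^^ j) (\<lambda>x y z. zbar_coord x y z ^ k)
      (r * sin \<theta> * sin \<phi>) (r * sin \<theta> * cos \<phi>) (r * cos \<theta>) =
    \<i> powi (int k - int j) * complex_of_real (r ^ k) * cis \<phi> powi (int k - int j)
      * complex_of_real (sin \<theta> powi (int j - int k) * legendre_deriv k j (cos \<theta>))"
proof -
  have L: "(Xminus_scalar ^^ j) (\<lambda>x y z. zbar_coord x y z ^ k)
      (r * sin \<theta> * sin \<phi>) (r * sin \<theta> * cos \<phi>) (r * cos \<theta>) =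
    (if j = k then fact k * 2 ^ k * complex_of_real (r * cos \<theta>) ^ k else 0)"
    using axis Xminus_scalar_iter_zbar_pow_on_axis[of j k "r * cos \<theta>"] by auto
  show ?thesis
  proof (cases "j = k")
    case True
    have "r ^ k * legendre_deriv k k (cos \<theta>) = fact k * 2 ^ k * (r * cos \<theta>) ^ k"
    proof (cases "r = 0")
      case False
      then have "(cos \<theta>)\<^sup>2 = 1"
        using axis sin_cos_squared_add[of \<theta>] by simp
      then show ?thesis
        by (simp add: legendre_deriv_at_pm1 power_mult_distrib)
    qed (cases k, simp_all add: legendre_deriv_0)
    from arg_cong[where f = complex_of_real, OF this] show ?thesis
      using True L by simp
  next
    case False
    then have "r ^ k * sin \<theta> powi (int j - int k) * legendre_deriv k j (cos \<theta>) = 0"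
      using axis j by (cases k) (auto simp: legendre_deriv_0)
    then show ?thesis
      using False L by (simp flip: of_real_mult)
  qed
qed

lemma Xminus_scalar_iter_zbar_pow_polar_off_axis:
  assumes "r > 0" "sin \<theta> > 0"
  shows "(Xminus_scalar ^^ j) (\<lambda>x y z. zbar_coord x y z ^ k)
      (r * sin \<theta> * sin \<phi>) (r * sin \<theta> * cos \<phi>) (r * cos \<theta>) =
    \<i> powi (int k - int j) * complex_of_real (r ^ k) * cis \<phi> powi (int k - int j)
      * complex_of_real (sin \<theta> powi (int j - int k) * legendre_deriv k j (cos \<theta>))"
proof -
  have "r\<^sup>2 = (r * sin \<theta> * sin \<phi>)\<^sup>2 + (r * sin \<theta> * cos \<phi>)\<^sup>2 + (r * cos \<theta>)\<^sup>2"
  proof -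
    have "(r * sin \<theta> * sin \<phi>)\<^sup>2 + (r * sin \<theta> * cos \<phi>)\<^sup>2 + (r * cos \<theta>)\<^sup>2
        = r\<^sup>2 * ((sin \<theta>)\<^sup>2 * ((sin \<phi>)\<^sup>2 + (cos \<phi>)\<^sup>2) + (cos \<theta>)\<^sup>2)"
      by algebra
    then show ?thesis by simp
  qed
  from Xminus_scalar_iter_zbar_pow_on_sphere[OF this, of j k, unfolded z_coord_spherical]
  have "complex_of_real r ^ j * (\<i> * complex_of_real r * complex_of_real (sin \<theta>) / cis \<phi>) ^ k
      * (Xminus_scalar ^^ j) (\<lambda>x y z. zbar_coord x y z ^ k)
          (r * sin \<theta> * sin \<phi>) (r * sin \<theta> * cos \<phi>) (r * cos \<theta>)
    = (-1) ^ (k + j) * complex_of_real r ^ (2 * k)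
      * (\<i> * complex_of_real r * complex_of_real (sin \<theta>) / cis \<phi>) ^ j
      * complex_of_real (legendre_deriv k j (cos \<theta>))" .
  from solve_sphere_identity[OF _ _ _ this] assms show ?thesis
    by simp
qed

lemma Xminus_scalar_iter_zbar_pow_spherical:
  assumes j: "j \<le> 2 * k + 1" and r: "0 \<le> r" and \<theta>: "0 \<le> \<theta>" "\<theta> \<le> pi"
  shows "1 / (fact k * 2 ^ k) * (Xminus_scalar ^^ j) (\<lambda>x y z. zbar_coord x y z ^ k)
      (r * sin \<theta> * sin \<phi>) (r * sin \<theta> * cos \<phi>) (r * cos \<theta>) =
    \<i> powi (int k - int j) * complex_of_real (r ^ k) *
      exp (\<i> * of_int (int k - int j) * complex_of_real \<phi>) *
      complex_of_real (assoc_legendre k (int j - int k) (cos \<theta>))"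
proof -
  have exp_eq: "exp (\<i> * of_int (int k - int j) * complex_of_real \<phi>) = cis \<phi> powi (int k - int j)"
    by (simp add: cis_conv_exp exp_power_int ac_simps)
  have "(Xminus_scalar ^^ j) (\<lambda>x y z. zbar_coord x y z ^ k)
      (r * sin \<theta> * sin \<phi>) (r * sin \<theta> * cos \<phi>) (r * cos \<theta>) =
    \<i> powi (int k - int j) * complex_of_real (r ^ k) * cis \<phi> powi (int k - int j)
      * complex_of_real (sin \<theta> powi (int j - int k) * legendre_deriv k j (cos \<theta>))"
  proof (cases "r = 0 \<or> sin \<theta> = 0")
    case True
    then show ?thesis by (rule Xminus_scalar_iter_zbar_pow_polar_axis[OF _ j])
  next
    case False
    then have "r > 0" "sin \<theta> > 0" using r sin_ge_zero[OF \<theta>] by auto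
    then show ?thesis by (rule Xminus_scalar_iter_zbar_pow_polar_off_axis)
  qed
  then show ?thesis
    unfolding assoc_legendre_cos[OF j \<theta>] exp_eq by (simp add: ac_simps)
qed

lemma Xminus_scalar_iter_pred_zbar_pow_spherical:
  assumes j: "j \<le> 2 * k + 1" and r: "0 \<le> r" and \<theta>: "0 \<le> \<theta>" "\<theta> \<le> pi"
  shows "s * of_nat j * (1 / (fact k * 2 ^ k)) * (Xminus_scalar ^^ (j - 1))
      (\<lambda>x y z. zbar_coord x y z ^ k) (r * sin \<theta> * sin \<phi>) (r * sin \<theta> * cos \<phi>) (r * cos \<theta>) =
    \<i> powi (int k - int j) * complex_of_real (r ^ k) *
      exp (\<i> * of_int (int k - int j) * complex_of_real \<phi>) *
      (s * \<i> * of_nat j * exp (\<i> * complex_of_real \<phi>) *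
        complex_of_real (assoc_legendre k (int j - int k - 1) (cos \<theta>)))"
proof (cases j)
  case (Suc i)
  define c :: complex where "c = 1 / (fact k * 2 ^ k)"
  define n where "n = int k - int j"
  define AL where "AL = complex_of_real (assoc_legendre k (int j - int k - 1) (cos \<theta>))"
  have "i \<le> 2 * k + 1" using j Suc by simp
  from Xminus_scalar_iter_zbar_pow_spherical[OF this r \<theta>, of \<phi>]
  have spherical_i: "c * (Xminus_scalar ^^ i) (\<lambda>x y z. zbar_coord x y z ^ k)
      (r * sin \<theta> * sin \<phi>) (r * sin \<theta> * cos \<phi>) (r * cos \<theta>) =
    \<i> powi (n + 1) * complex_of_real (r ^ k) * exp (\<i> * of_int (n + 1) * complex_of_real \<phi>) * AL"
    using Suc by (simp add: c_def n_def AL_def algebra_simps)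
  have exp_Suc: "exp (\<i> * of_int (n + 1) * complex_of_real \<phi>) =
      exp (\<i> * of_int n * complex_of_real \<phi>) * exp (\<i> * complex_of_real \<phi>)"
    by (simp add: algebra_simps flip: exp_add)
  have i_powi_Suc: "\<i> powi (n + 1) = \<i> powi n * \<i>"
    by (simp add: power_int_add_1)
  have "s * of_nat j * c * (Xminus_scalar ^^ (j - 1)) (\<lambda>x y z. zbar_coord x y z ^ k)
      (r * sin \<theta> * sin \<phi>) (r * sin \<theta> * cos \<phi>) (r * cos \<theta>) =
    s * of_nat j * (\<i> powi (n + 1) * complex_of_real (r ^ k)
      * exp (\<i> * of_int (n + 1) * complex_of_real \<phi>) * AL)"
    using Suc spherical_i by (simp add: ac_simps)
  also have "\<dots> = \<i> powi n * complex_of_real (r ^ k) * exp (\<i> * of_int n * complex_of_real \<phi>)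
      * (s * \<i> * of_nat j * exp (\<i> * complex_of_real \<phi>) * AL)"
    unfolding exp_Suc i_powi_Suc by (simp add: ac_simps)
  finally show ?thesis
    unfolding c_def n_def AL_def .
qed simp

theorem theorem3p4:
  fixes k j :: nat and pm :: bool and r \<theta> \<phi> :: real
  assumes "j \<le> 2 * k + 1" and "0 \<le> r" and "- pi \<le> \<phi>" and "\<phi> \<le> pi"
    and "0 \<le> \<theta>" and "\<theta> \<le> pi"
  shows "Fkj k pm j (r * sin \<theta> * sin \<phi>) (r * sin \<theta> * cos \<phi>) (r * cos \<theta>) =
    cl_add
      (cl_scale (\<i> powi (int k - int j) * complex_of_real (r ^ k) *
                 exp (\<i> * of_int (int k - int j) * complex_of_real \<phi>) *
                 complex_of_real (assoc_legendre k (int j - int k) (cos \<theta>)))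
                (vplus pm))
      (cl_scale (\<i> powi (int k - int j) * complex_of_real (r ^ k) *
                 exp (\<i> * of_int (int k - int j) * complex_of_real \<phi>) *
                 ((if pm then 1 else -1) * \<i> * of_nat j * exp (\<i> * complex_of_real \<phi>) *
                  complex_of_real (assoc_legendre k (int j - int k - 1) (cos \<theta>))))
                (vminus pm))"
  unfolding Fkj_eq_spinor_fun spinor_fun_def
    Xminus_scalar_iter_zbar_pow_spherical[OF assms(1,2,5,6)]
    Xminus_scalar_iter_pred_zbar_pow_spherical[OF assms(1,2,5,6)] ..

end
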